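(* Let $R>1$ and let $f$ be analytic in a neighborhood of $\Omega_R=\{z\in\mathbb{C}: 1\le |z|\le R,\ \Im z\ge 0\}$. Let $\rho>0$ and suppose that for some constant $C_0>0$, $|f(x)|\le C_0|x|^\rho$ for all $x\in\mathbb{R}\cap\Omega_R$. Set $M=\max_{|z|=1,\, z\in\Omega_R}|f(z)|$ and $$A(R)=\max\Big(C_0R^\rho,\ MR^\rho,\ \max_{z\in\Omega_R}\Re f(z)\Big).$$ Then if $1<r<R$ and $z\in\Omega_R$ with $|z|=r$, we have $|f(z)|\le \frac{2r^\rho}{R^\rho-r^\rho}A(R)$. *)

theory Defs
  imports "HOL-Analysis.Analysis"
begin

definition half_annulus :: "real \<Rightarrow> complex set" where
  "half_annulus R = {z. 1 \<le> norm z \<and> norm z \<le> R \<and> Im z \<ge> 0}"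

end

theory Submission
  imports Defs "HOL-Complex_Analysis.Complex_Analysis"
begin

text \<open>
  The map \<open>c \<mapsto> c / (2A - c)\<close> sends the half-plane \<open>Re c \<le> A\<close> into the closed unit disc, and
  it sends values of modulus at most \<open>A t\<close> (with \<open>0 \<le> t \<le> 1\<close>) into the disc of radius \<open>t\<close>.
  Hence \<open>h = f / (2A - f)\<close> satisfies \<open>|h(w)| \<le> (|w|/R)\<^sup>\<rho>\<close> on the whole boundary of \<open>\<Omega>\<^sub>R\<close>: on the
  outer arc trivially, on the inner arc and on the real segments by the hypotheses and the
  choice of \<open>A\<close>. Dividing \<open>h\<close> by a holomorphic branch of \<open>(-\<i> w / R)\<^sup>\<rho>\<close>, which exists on \<open>\<Omega>\<^sub>R\<close>,
  the maximum modulus principle gives \<open>|h(z)| \<le> (r/R)\<^sup>\<rho>\<close>, and solving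
  \<open>f = 2A h / (1 + h)\<close> for \<open>|f(z)|\<close> gives the bound.
\<close>

lemma norm_le_norm_reflect:
  fixes c :: complex
  assumes "Re c \<le> a" "a > 0"
  shows "norm c \<le> norm (2 * of_real a - c)"
proof -
  have "(Re c)\<^sup>2 \<le> (2 * a - Re c)\<^sup>2"
  proof -
    have "(2 * a - Re c)\<^sup>2 - (Re c)\<^sup>2 = 4 * a * (a - Re c)"
      by (simp add: power2_eq_square algebra_simps)
    also have "\<dots> \<ge> 0" using assms by simp
    finally show ?thesis by simp
  qed
  then have "(norm c)\<^sup>2 \<le> (norm (2 * of_real a - c))\<^sup>2"
    by (simp add: cmod_power2)
  then show ?thesis by (rule power2_le_imp_le) simp
qed

lemma reflect_denominator_nonzero:
  fixes c :: complex
  assumes "Re c \<le> a" "a > 0"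
  shows "2 * of_real a - c \<noteq> 0"
  using assms by (auto simp: complex_eq_iff)

lemma norm_divide_reflect_le:
  fixes c :: complex
  assumes "Re c \<le> a" "a > 0" "0 \<le> t" "t \<le> 1" and small: "t = 1 \<or> norm c \<le> a * t"
  shows "norm (c / (2 * of_real a - c)) \<le> t"
proof -
  have nz: "norm (2 * of_real a - c) > 0"
    using reflect_denominator_nonzero[OF assms(1,2)] by simp
  have "norm c \<le> t * norm (2 * of_real a - c)"
    using small
  proof
    assume "t = 1"
    then show ?thesis using norm_le_norm_reflect[OF assms(1,2)] by simp
  next
    assume c: "norm c \<le> a * t"
    have "norm (2 * of_real a - c) \<ge> 2 * a - norm c"
      using norm_triangle_ineq2[of "2 * of_real a" c] by simp
    then have "t * norm (2 * of_real a - c) \<ge> t * (2 * a - a * t)"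
      using c assms(3) by (intro mult_left_mono) auto
    moreover have "t * (2 * a - a * t) - a * t = a * t * (1 - t)"
      by (simp add: algebra_simps)
    moreover have "a * t * (1 - t) \<ge> 0" using assms by simp
    ultimately show ?thesis using c by linarith
  qed
  then show ?thesis using nz by (simp add: norm_divide divide_le_eq)
qed

lemma norm_le_of_norm_divide_reflect_le:
  fixes c :: complex
  assumes "Re c \<le> a" "a > 0" "norm (c / (2 * of_real a - c)) \<le> s" "s < 1"
  shows "norm c \<le> 2 * a * s / (1 - s)"
proof -
  define h where "h = c / (2 * of_real a - c)"
  have "c * (1 + h) = 2 * of_real a * h"
    unfolding h_def using reflect_denominator_nonzero[OF assms(1,2)]
    by (simp add: field_simps)
  then have "norm c * norm (1 + h) = 2 * a * norm h"
    using assms(2) by (metis abs_of_pos norm_mult norm_numeral norm_of_real)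
  moreover have "norm (1 + h) \<ge> 1 - s"
    using norm_triangle_ineq2[of 1 "-h"] assms(3) unfolding h_def by simp
  ultimately have "norm c * (1 - s) \<le> 2 * a * s"
    using assms(2,3) unfolding h_def
    by (smt (verit) mult_left_mono norm_ge_zero)
  then show ?thesis using assms(4) by (simp add: le_divide_eq)
qed

lemma maximum_modulus_frontier_weighted:
  assumes "compact S" "g holomorphic_on S" "q holomorphic_on S"
    and "\<And>w. w \<in> S \<Longrightarrow> q w \<noteq> 0"
    and "\<And>w. w \<in> frontier S \<Longrightarrow> norm (g w) \<le> norm (q w)"
    and "z \<in> S"
  shows "norm (g z) \<le> norm (q z)"
proof -
  have closed: "closed S" and bounded: "bounded S"
    using assms(1) by (auto simp: compact_eq_bounded_closed)
  have hol: "(\<lambda>w. g w / q w) holomorphic_on S"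
    using assms(2-4) by (intro holomorphic_intros) auto
  have "norm (g w / q w) \<le> 1" if "w \<in> frontier S" for w
  proof -
    have "w \<in> S" using that closed frontier_subset_closed by blast
    then show ?thesis using assms(4,5) that by (simp add: norm_divide divide_le_eq)
  qed
  then have "norm (g z / q z) \<le> 1"
    using maximum_modulus_frontier[of "\<lambda>w. g w / q w" S 1 z] hol closed bounded assms(6)
    by (metis closure_closed holomorphic_on_imp_continuous_on holomorphic_on_subset
        interior_subset)
  then show ?thesis using assms(4,6) by (simp add: norm_divide divide_le_eq)
qed

lemma compact_half_annulus: "compact (half_annulus R)"
proof -
  have "half_annulus R = {w. 1 \<le> norm w} \<inter> {w. norm w \<le> R} \<inter> {w. 0 \<le> Im w}"
    unfolding half_annulus_def by auto
  then have "closed (half_annulus R)"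
    by (simp only:) (intro closed_Int closed_Collect_le continuous_intros)
  moreover have "bounded (half_annulus R)"
    unfolding bounded_iff half_annulus_def by auto
  ultimately show ?thesis by (simp add: compact_eq_bounded_closed)
qed

lemma frontier_half_annulus:
  assumes "w \<in> frontier (half_annulus R)"
  shows "w \<in> half_annulus R" "norm w = 1 \<or> norm w = R \<or> Im w = 0"
proof -
  show wS: "w \<in> half_annulus R"
    using assms frontier_subset_closed[OF compact_imp_closed[OF compact_half_annulus]] by blast
  define U where "U = {w. 1 < norm w} \<inter> {w. norm w < R} \<inter> {w. 0 < Im w}"
  have "open U" unfolding U_def
    by (intro open_Int open_Collect_less continuous_intros)
  moreover have "U \<subseteq> half_annulus R" unfolding U_def half_annulus_def by auto
  ultimately have "U \<subseteq> interior (half_annulus R)" by (rule interior_maximal[rotated])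
  then have "w \<notin> U" using assms by (auto simp: frontier_def)
  then show "norm w = 1 \<or> norm w = R \<or> Im w = 0"
    using wS unfolding U_def half_annulus_def by auto
qed

text \<open>
  The branch is \<open>w \<mapsto> (-\<i> w)\<^sup>\<rho>\<close> with the principal logarithm: multiplying by \<open>-\<i>\<close> turns
  the closed upper half-plane minus \<open>0\<close> into the closed right half-plane minus \<open>0\<close>, which avoids
  the cut along the non-positive reals.
\<close>
lemma holomorphic_powr_on_half_annulus:
  obtains q where "q holomorphic_on half_annulus R"
    "\<And>w. w \<in> half_annulus R \<Longrightarrow> norm (q w) = (norm w / R) powr \<rho>"
proof
  show "(\<lambda>w. exp (of_real \<rho> * Ln (-\<i> * w)) * of_real (inverse (R powr \<rho>))) holomorphic_on half_annulus R"
  proof (intro holomorphic_intros)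
    fix w assume "w \<in> half_annulus R"
    then show "-\<i> * w \<notin> \<real>\<^sub>\<le>\<^sub>0"
      by (auto simp: half_annulus_def complex_nonpos_Reals_iff cmod_def)
  qed
  fix w assume "w \<in> half_annulus R"
  then have "w \<noteq> 0" by (auto simp: half_annulus_def)
  then have "norm (exp (of_real \<rho> * Ln (-\<i> * w))) = norm w powr \<rho>"
    by (simp add: norm_exp_eq_Re powr_def norm_mult)
  then show "norm (exp (of_real \<rho> * Ln (-\<i> * w)) * of_real (inverse (R powr \<rho>))) = (norm w / R) powr \<rho>"
    unfolding powr_divide by (simp add: norm_mult norm_inverse divide_inverse)
qed

lemma maximum_modulus_half_annulus_powr:
  assumes "g holomorphic_on half_annulus R"
    and "\<And>w. w \<in> frontier (half_annulus R) \<Longrightarrow> norm (g w) \<le> (norm w / R) powr \<rho>"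
    and "z \<in> half_annulus R"
  shows "norm (g z) \<le> (norm z / R) powr \<rho>"
proof -
  obtain q where q: "q holomorphic_on half_annulus R"
    "\<And>w. w \<in> half_annulus R \<Longrightarrow> norm (q w) = (norm w / R) powr \<rho>"
    using holomorphic_powr_on_half_annulus[where R = R and \<rho> = \<rho>] by blast
  have "q w \<noteq> 0" if "w \<in> half_annulus R" for w
    using q(2)[OF that] that by (auto simp: half_annulus_def)
  then have "norm (g z) \<le> norm (q z)"
    using maximum_modulus_frontier_weighted[OF compact_half_annulus assms(1) q(1)]
      assms(2,3) frontier_half_annulus(1) q(2) by metis
  then show ?thesis using q(2) assms(3) by simp
qed

lemma le_Sup_image_compact:
  fixes g :: "'a::topological_space \<Rightarrow> real"
  assumes "compact S" "continuous_on S g" "w \<in> S"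
  shows "g w \<le> Sup (g ` S)"
  using assms by (intro cSup_upper imageI bounded_imp_bdd_above compact_imp_bounded
      compact_continuous_image)

lemma frontier_half_annulus_bound:
  fixes f :: "complex \<Rightarrow> complex"
  assumes "continuous_on (half_annulus R) f" "R > 0"
    and real_bound: "\<And>x::real. of_real x \<in> half_annulus R \<Longrightarrow> norm (f (of_real x)) \<le> C * \<bar>x\<bar> powr \<rho>"
    and M: "M = Sup ((\<lambda>w. norm (f w)) ` {w \<in> half_annulus R. norm w = 1})"
    and "C * R powr \<rho> \<le> A" "M * R powr \<rho> \<le> A"
    and w: "w \<in> frontier (half_annulus R)" "norm w \<noteq> R"
  shows "norm (f w) \<le> A * (norm w / R) powr \<rho>"
proof -
  have wS: "w \<in> half_annulus R" using frontier_half_annulus(1)[OF w(1)] .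
  have Rpos: "R powr \<rho> > 0" using assms(2) by simp
  have "norm w = 1 \<or> Im w = 0" using frontier_half_annulus(2)[OF w(1)] w(2) by blast
  then show ?thesis
  proof
    assume w1: "norm w = 1"
    have "compact {w \<in> half_annulus R. norm w = 1}"
      using compact_half_annulus
      by (simp add: Collect_conj_eq closed_Collect_eq continuous_on_norm
          compact_Int_closed continuous_on_id continuous_on_const)
    then have "norm (f w) \<le> M" unfolding M using w1 wS
      by (intro le_Sup_image_compact continuous_intros continuous_on_subset[OF assms(1)]) auto
    also have "M \<le> A / R powr \<rho>" using assms(6) Rpos by (simp add: le_divide_eq)
    finally show ?thesis using w1 by (simp add: powr_divide)
  next
    assume "Im w = 0"
    then have we: "w = of_real (Re w)" by (simp add: complex_eq_iff)
    have "norm (f w) \<le> C * \<bar>Re w\<bar> powr \<rho>"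
      using real_bound[of "Re w"] wS we by simp
    also have "\<dots> \<le> A / R powr \<rho> * \<bar>Re w\<bar> powr \<rho>"
      using assms(5) Rpos by (intro mult_right_mono) (simp_all add: le_divide_eq)
    also have "\<dots> = A * (norm w / R) powr \<rho>"
      using \<open>Im w = 0\<close> by (simp add: cmod_def powr_divide)
    finally show ?thesis .
  qed
qed

theorem lemma2p1:
  fixes f :: "complex \<Rightarrow> complex" and R \<rho> C\<^sub>0 M A r :: real and z :: complex
  assumes "R > 1"
    and "f analytic_on half_annulus R"
    and "\<rho> > 0" and "C\<^sub>0 > 0"
    and "\<And>x::real. of_real x \<in> half_annulus R \<Longrightarrow> norm (f (of_real x)) \<le> C\<^sub>0 * \<bar>x\<bar> powr \<rho>"
    and "M = Sup ((\<lambda>w. norm (f w)) ` {w \<in> half_annulus R. norm w = 1})"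
    and "A = max (C\<^sub>0 * R powr \<rho>) (max (M * R powr \<rho>) (Sup ((\<lambda>w. Re (f w)) ` half_annulus R)))"
    and "1 < r" and "r < R"
    and "z \<in> half_annulus R" and "norm z = r"
  shows "norm (f z) \<le> 2 * r powr \<rho> / (R powr \<rho> - r powr \<rho>) * A"
proof -
  have hol: "f holomorphic_on half_annulus R"
    using assms(2) analytic_imp_holomorphic by blast
  then have cont: "continuous_on (half_annulus R) f"
    by (rule holomorphic_on_imp_continuous_on)
  have ReA: "Re (f w) \<le> A" if "w \<in> half_annulus R" for w
    using le_Sup_image_compact[OF compact_half_annulus _ that, of "\<lambda>w. Re (f w)"] cont assms(7)
    by (force intro: continuous_intros)
  have R_pos: "R > 0" using assms(1) by simp
  have A_pos: "A > 0" using R_pos assms(4,7) by (smt (verit) powr_gt_zero mult_pos_pos)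
  let ?h = "\<lambda>w. f w / (2 * of_real A - f w)"
  have hol_h: "?h holomorphic_on half_annulus R"
    using hol ReA A_pos reflect_denominator_nonzero by (intro holomorphic_intros) auto
  have frontier_h: "norm (?h w) \<le> (norm w / R) powr \<rho>" if w: "w \<in> frontier (half_annulus R)" for w
  proof -
    have wS: "w \<in> half_annulus R" using frontier_half_annulus(1)[OF w] .
    have t_le_1: "(norm w / R) powr \<rho> \<le> 1"
      using wS assms(1,3) by (intro powr_le1) (auto simp: half_annulus_def)
    have "C\<^sub>0 * R powr \<rho> \<le> A" "M * R powr \<rho> \<le> A" using assms(7) by auto
    then have "norm w \<noteq> R \<Longrightarrow> norm (f w) \<le> A * (norm w / R) powr \<rho>"
      using frontier_half_annulus_bound[OF cont _ assms(5,6) _ _ w] R_pos by blast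
    then have "(norm w / R) powr \<rho> = 1 \<or> norm (f w) \<le> A * (norm w / R) powr \<rho>"
      using R_pos by fastforce
    then show ?thesis
      using norm_divide_reflect_le[OF ReA[OF wS] A_pos _ t_le_1] by simp
  qed
  have "norm (?h z) \<le> (r / R) powr \<rho>"
    using maximum_modulus_half_annulus_powr[OF hol_h frontier_h assms(10)] assms(11) by simp
  moreover have "(r / R) powr \<rho> < 1"
    using powr_less_mono2[of \<rho> "r / R" 1] assms(3,8,9) R_pos by simp
  ultimately have "norm (f z) \<le> 2 * A * (r / R) powr \<rho> / (1 - (r / R) powr \<rho>)"
    by (rule norm_le_of_norm_divide_reflect_le[OF ReA[OF assms(10)] A_pos])
  also have "\<dots> = 2 * r powr \<rho> / (R powr \<rho> - r powr \<rho>) * A"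
    using assms(1) by (simp add: powr_divide field_simps)
  finally show ?thesis .
qed

end
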